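(* Let $0<s_{\min}<s_{\max}<\infty$ with $s_{\max}>2s_{\min}$, let $\alpha\in(0,1/2)$, and let $\varepsilon\in(1/2,1)$ be a constant. Then there does not exist a confidence set $C_n=C_n(Y)\subseteq\ell^2$ such that for every $0<b<B$ and $J_0\in\mathbb N$: $$\liminf_{n\to\infty}\ \inf_{f\in\bigcup_{s\in[s_{\min},s_{\max}]}S^s_\varepsilon(b,B,J_0)}\Pr_f(f\in C_n)\ge1-\alpha,$$ and for all $s\in[s_{\min},s_{\max}]$ and $\delta>0$ there exists $K>0$ with $$\limsup_{n\to\infty}\sup_{f\in S^s_\varepsilon(b,B,J_0)}\Pr_f\big(|C_n|>Kn^{-s/(2s+1)}\big)\le\delta,$$ where $|C_n|$ is the $\ell^2$-diameter of $C_n$.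
   Context: Gaussian sequence model: observations $Y=(y_k)_{k\in\mathbb N}$, $y_k=f_k+n^{-1/2}g_k$, $g_k$ i.i.d. $N(0,1)$, $f\in\ell^2$; $\Pr_f$ is the law of $Y$. Sobolev norm $\|f\|_{s,2}^2=\sum_k f_k^2k^{2s}$. Convention: $\sum_{k=a}^b$ for real $a,b$ means $\sum_{k=\lceil a\rceil}^{\lfloor b\rfloor}$. For $s>0$, $\varepsilon\in(0,1)$, $J_0\in\mathbb N$, $0<b<B$, and $c(s)=16\times2^{2s+1}$, $$S^s_\varepsilon(b,B,J_0)=\Big\{f\in\ell^2:\|f\|_{s,2}\in[b,B],\ \sum_{k=2^{J(1-\varepsilon)}}^{2^J}f_k^2\ge c(s)\|f\|_{s,2}^2 2^{-2Js}\ \forall J\in\mathbb N, J\ge J_0\Big\}.$$ *)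

theory Defs
  imports "HOL-Probability.Probability"
begin

text \<open>Indexing convention: the paper indexes sequences by k = 1,2,3,...
  An Isabelle sequence F :: nat => real represents (f_k) via f_k = F (k - 1),
  i.e. Isabelle coordinate i holds f_(i+1).\<close>

definition l2 :: "(nat \<Rightarrow> real) set" where
  "l2 = {F. summable (\<lambda>i. (F i)\<^sup>2)}"

definition l2_dist :: "(nat \<Rightarrow> real) \<Rightarrow> (nat \<Rightarrow> real) \<Rightarrow> real" where
  "l2_dist F G = sqrt (\<Sum>i. (F i - G i)\<^sup>2)"

text \<open>l2-diameter of a set (possibly infinite; -infinity for the empty set).\<close>
definition l2_diam :: "(nat \<Rightarrow> real) set \<Rightarrow> ereal" where
  "l2_diam C = (SUP F\<in>C. SUP G\<in>C. ereal (l2_dist F G))"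

definition sobolev_norm :: "real \<Rightarrow> (nat \<Rightarrow> real) \<Rightarrow> real" where
  "sobolev_norm s F = sqrt (\<Sum>i. (F i)\<^sup>2 * (real (i + 1)) powr (2 * s))"

definition c_const :: "real \<Rightarrow> real" where
  "c_const s = 16 * 2 powr (2 * s + 1)"

definition band_sum :: "(nat \<Rightarrow> real) \<Rightarrow> real \<Rightarrow> real \<Rightarrow> real" where
  "band_sum F a b = (\<Sum>k\<in>{k::nat. real_of_int \<lceil>a\<rceil> \<le> real k \<and> real k \<le> real_of_int \<lfloor>b\<rfloor> \<and> 1 \<le> k}. (F (k - 1))\<^sup>2)"

definition S_class :: "real \<Rightarrow> real \<Rightarrow> real \<Rightarrow> real \<Rightarrow> nat \<Rightarrow> (nat \<Rightarrow> real) set" where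
  "S_class s \<epsilon> b B J0 = {F \<in> l2.
      summable (\<lambda>i. (F i)\<^sup>2 * (real (i + 1)) powr (2 * s)) \<and>
      b \<le> sobolev_norm s F \<and> sobolev_norm s F \<le> B \<and>
      (\<forall>J::nat. J \<ge> J0 \<longrightarrow>
         band_sum F (2 powr (real J * (1 - \<epsilon>))) (2 powr real J)
           \<ge> c_const s * (sobolev_norm s F)\<^sup>2 * 2 powr (- 2 * real J * s))}"

text \<open>Law P_f of Y = (y_k), y_k = f_k + n^(-1/2) g_k, g_k iid N(0,1):
  infinite product of normal distributions with means f_k and sd n^(-1/2).\<close>
definition Pr :: "nat \<Rightarrow> (nat \<Rightarrow> real) \<Rightarrow> (nat \<Rightarrow> real) measure" where
  "Pr n F = (\<Pi>\<^sub>M i\<in>UNIV. density lborel (normal_density (F i) (1 / sqrt (real n))))"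

text \<open>Sample space measurable structure (same sigma-algebra as every Pr n F).\<close>
definition Ysp :: "(nat \<Rightarrow> real) measure" where
  "Ysp = (\<Pi>\<^sub>M i\<in>UNIV. (borel :: real measure))"

end

theory Submission
  imports Defs
begin

text \<open>Choose \<open>s2 \<in> (2 s_min, s_max]\<close> and \<open>t > s2\<close> with \<open>t (1 - \<epsilon>) < s_min\<close>, possible since \<open>\<epsilon> > 1/2\<close>.
  The lacunary sequence \<open>f_k = k^(-t)\<close> (\<open>k\<close> a power of two) satisfies the band condition of both
  classes through its lacunary coefficients alone, so it lies in \<open>S^s2\<close>, and its sign perturbations
  of size \<open>\<rho>\<close> on a dyadic block \<open>2^p < k < 2^(p+1)\<close> lie in \<open>S^s_min\<close>.
  An adaptive confidence set has diameter of order \<open>n^(-s2 / (2 s2 + 1))\<close> at \<open>f\<close>, while for suitable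
  \<open>p\<close> the perturbations are much farther from \<open>f\<close> than that; so with probability near \<open>1 - \<alpha>\<close> under
  \<open>f\<close> the set covers \<open>f\<close> but none of the perturbations. The likelihood ratio of the uniform mixture of
  the perturbed laws against the law at \<open>f\<close> has second moment \<open>cosh (n \<rho>\<^sup>2) ^ card (block p)\<close>, close
  to 1, so that event also has probability near \<open>1 - \<alpha>\<close> under the mixture, contradicting coverage
  \<open>1 - \<alpha>\<close> of each perturbation since \<open>\<alpha> < 1/2\<close>.\<close>

section \<open>Product measures with finitely many densities\<close>

lemma (in product_prob_space) nn_integral_PiM_prod_finite:
  assumes F: "finite F" "F \<subseteq> I"
    and h: "\<And>i. i \<in> F \<Longrightarrow> h i \<in> borel_measurable (M i)"
  shows "(\<integral>\<^sup>+ y. (\<Prod>i\<in>F. h i (y i)) \<partial>PiM I M) = (\<Prod>i\<in>F. \<integral>\<^sup>+ x. h i x \<partial>M i)"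
proof -
  have meas: "(\<lambda>y. \<Prod>i\<in>F. h i (y i)) \<in> borel_measurable (PiM F M)"
    using h by (intro borel_measurable_prod_ennreal) (auto intro: measurable_component_singleton[THEN measurable_compose])
  have "(\<integral>\<^sup>+ y. (\<Prod>i\<in>F. h i (y i)) \<partial>PiM I M) = (\<integral>\<^sup>+ y. (\<Prod>i\<in>F. h i (restrict y F i)) \<partial>PiM I M)"
    by (intro nn_integral_cong prod.cong) auto
  also have "\<dots> = (\<integral>\<^sup>+ y. (\<Prod>i\<in>F. h i (y i)) \<partial>distr (PiM I M) (PiM F M) (\<lambda>x. restrict x F))"
    using F meas by (subst nn_integral_distr) (auto intro!: measurable_restrict_subset)
  also have "\<dots> = (\<integral>\<^sup>+ y. (\<Prod>i\<in>F. h i (y i)) \<partial>PiM F M)"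
    using F by (simp add: distr_PiM_restrict_finite)
  also have "\<dots> = (\<Prod>i\<in>F. \<integral>\<^sup>+ x. h i x \<partial>M i)"
    using F h by (intro product_nn_integral_prod) auto
  finally show ?thesis .
qed

lemma indicator_prod_emb:
  assumes "y \<in> space (PiM I M)" "J \<subseteq> I" "finite J"
  shows "indicator (prod_emb I M J (Pi\<^sub>E J A)) y = (\<Prod>i\<in>J. indicator (A i) (y i) :: ennreal)"
proof (cases "\<forall>i\<in>J. y i \<in> A i")
  case True
  then show ?thesis
    using assms by (simp add: prod_emb_iff space_PiM PiE_def Pi_def)
next
  case False
  then obtain i where "i \<in> J" "y i \<notin> A i" by blast
  moreover from this have "y \<notin> prod_emb I M J (Pi\<^sub>E J A)"
    by (auto simp: prod_emb_iff)
  ultimately show ?thesis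
    using assms by (subst prod_zero) (auto intro: bexI[of _ i])
qed

lemma (in product_prob_space) emeasure_density_prod_emb:
  assumes F: "finite F" "F \<subseteq> I" and g: "\<And>i. i \<in> F \<Longrightarrow> g i \<in> borel_measurable (M i)"
    and J: "finite J" "J \<subseteq> I" and A: "\<And>j. j \<in> J \<Longrightarrow> A j \<in> sets (M j)"
  shows "emeasure (density (PiM I M) (\<lambda>y. \<Prod>i\<in>F. g i (y i))) (prod_emb I M J (Pi\<^sub>E J A))
    = (\<Prod>i\<in>J \<union> F. \<integral>\<^sup>+ x. (if i \<in> J then indicator (A i) x else 1) * (if i \<in> F then g i x else 1) \<partial>M i)"
proof -
  define h where
    "h i x = (if i \<in> J then indicator (A i) x else 1) * (if i \<in> F then g i x else 1)" for i x
  have h_meas: "h i \<in> borel_measurable (M i)" if "i \<in> J \<union> F" for i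
    using A g that unfolding h_def
    by (cases "i \<in> J"; cases "i \<in> F") (auto intro!: borel_measurable_times_ennreal)
  have "(\<lambda>y. \<Prod>i\<in>F. g i (y i)) \<in> borel_measurable (PiM I M)"
    using g F by (intro borel_measurable_prod_ennreal) (auto intro: measurable_component_singleton[THEN measurable_compose])
  moreover have "prod_emb I M J (Pi\<^sub>E J A) \<in> sets (PiM I M)"
    using J A by (intro measurable_prod_emb sets_PiM_I_finite) auto
  ultimately have "emeasure (density (PiM I M) (\<lambda>y. \<Prod>i\<in>F. g i (y i))) (prod_emb I M J (Pi\<^sub>E J A))
      = (\<integral>\<^sup>+ y. (\<Prod>i\<in>F. g i (y i)) * indicator (prod_emb I M J (Pi\<^sub>E J A)) y \<partial>PiM I M)"
    by (rule emeasure_density)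
  also have "\<dots> = (\<integral>\<^sup>+ y. (\<Prod>i\<in>J \<union> F. h i (y i)) \<partial>PiM I M)"
  proof (rule nn_integral_cong)
    fix y assume y: "y \<in> space (PiM I M)"
    have "(\<Prod>i\<in>J \<union> F. h i (y i))
        = (\<Prod>i\<in>J \<union> F. if i \<in> J then indicator (A i) (y i) else 1) * (\<Prod>i\<in>J \<union> F. if i \<in> F then g i (y i) else 1)"
      unfolding h_def by (rule prod.distrib)
    also have "\<dots> = (\<Prod>i\<in>J. indicator (A i) (y i)) * (\<Prod>i\<in>F. g i (y i))"
      using J F by (simp add: prod.If_cases Int_absorb1 Int_absorb2)
    finally show "(\<Prod>i\<in>F. g i (y i)) * indicator (prod_emb I M J (Pi\<^sub>E J A)) y = (\<Prod>i\<in>J \<union> F. h i (y i))"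
      using J y by (simp add: indicator_prod_emb mult.commute)
  qed
  also have "\<dots> = (\<Prod>i\<in>J \<union> F. \<integral>\<^sup>+ x. h i x \<partial>M i)"
    using J F h_meas by (intro nn_integral_PiM_prod_finite) auto
  finally show ?thesis
    by (simp add: h_def)
qed

lemma (in product_prob_space) PiM_density_prod_finite:
  assumes F: "finite F" "F \<subseteq> I"
    and g: "\<And>i. i \<in> F \<Longrightarrow> g i \<in> borel_measurable (M i)"
    and g1: "\<And>i. i \<in> F \<Longrightarrow> (\<integral>\<^sup>+ x. g i x \<partial>M i) = 1"
  shows "PiM I (\<lambda>i. if i \<in> F then density (M i) (g i) else M i)
       = density (PiM I M) (\<lambda>y. \<Prod>i\<in>F. g i (y i))"
proof -
  define N where "N i = (if i \<in> F then density (M i) (g i) else M i)" for i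
  have space_N: "space (N i) = space (M i)" and sets_N: "sets (N i) = sets (M i)" for i
    by (simp_all add: N_def)
  have N_prob: "prob_space (N i)" for i
  proof (cases "i \<in> F")
    case True
    then show ?thesis
      using g g1 by (intro prob_spaceI) (simp add: N_def emeasure_density nn_integral_set_ennreal[symmetric])
  qed (simp add: N_def M.prob_space_axioms)
  interpret N: product_prob_space N I
    by (simp add: N_prob product_prob_space_def product_sigma_finite_def prob_space_imp_sigma_finite
        product_prob_space_axioms_def)
  have "density (PiM I M) (\<lambda>y. \<Prod>i\<in>F. g i (y i)) = PiM I N"
  proof (rule N.PiM_eq)
    show "sets (density (PiM I M) (\<lambda>y. \<Prod>i\<in>F. g i (y i))) = sets (PiM I N)"
      by (simp, intro sets_PiM_cong) (auto simp: N_def)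
  next
    fix J A assume J: "finite J" "J \<subseteq> I" and A: "\<And>j. j \<in> J \<Longrightarrow> A j \<in> sets (N j)"
    then have A_sets: "A i \<in> sets (M i)" if "i \<in> J" for i
      using that by (simp add: sets_N)
    have "prod_emb I N J (Pi\<^sub>E J A) = prod_emb I M J (Pi\<^sub>E J A)"
      by (simp add: prod_emb_def space_N)
    then have "emeasure (density (PiM I M) (\<lambda>y. \<Prod>i\<in>F. g i (y i))) (prod_emb I N J (Pi\<^sub>E J A))
        = (\<Prod>i\<in>J \<union> F. \<integral>\<^sup>+ x. (if i \<in> J then indicator (A i) x else 1) * (if i \<in> F then g i x else 1) \<partial>M i)"
      using emeasure_density_prod_emb[OF F g J A_sets] by simp
    also have "\<dots> = (\<Prod>i\<in>J \<union> F. if i \<in> J then emeasure (N i) (A i) else 1)"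
      using A_sets g g1 by (intro prod.cong) (auto simp: N_def emeasure_density mult.commute)
    also have "\<dots> = (\<Prod>j\<in>J. emeasure (N j) (A j))"
      using J F by (simp add: prod.If_cases Int_absorb1)
    finally show "emeasure (density (PiM I M) (\<lambda>y. \<Prod>i\<in>F. g i (y i))) (prod_emb I N J (Pi\<^sub>E J A))
        = (\<Prod>j\<in>J. emeasure (N j) (A j))" .
  qed
  then show ?thesis by (simp add: N_def[abs_def])
qed

section \<open>Gaussian likelihood ratios\<close>

definition gauss_lr :: "real \<Rightarrow> real \<Rightarrow> real \<Rightarrow> real \<Rightarrow> real" where
  "gauss_lr \<sigma> a c y = exp ((c * (y - a) - c\<^sup>2 / 2) / \<sigma>\<^sup>2)"

lemma gauss_lr_pos: "0 < gauss_lr \<sigma> a c y"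
  by (simp add: gauss_lr_def)

lemma borel_measurable_gauss_lr [measurable]: "gauss_lr \<sigma> a c \<in> borel_measurable borel"
  unfolding gauss_lr_def[abs_def] by simp

lemma normal_density_shift:
  assumes "0 < \<sigma>"
  shows "normal_density (a + c) \<sigma> y = normal_density a \<sigma> y * gauss_lr \<sigma> a c y"
proof -
  have "-(y - (a + c))\<^sup>2 / (2 * \<sigma>\<^sup>2) = -(y - a)\<^sup>2 / (2 * \<sigma>\<^sup>2) + (c * (y - a) - c\<^sup>2 / 2) / \<sigma>\<^sup>2"
    using assms by (simp add: field_simps power2_eq_square)
  then have "exp (-(y - (a + c))\<^sup>2 / (2 * \<sigma>\<^sup>2)) = exp (-(y - a)\<^sup>2 / (2 * \<sigma>\<^sup>2)) * gauss_lr \<sigma> a c y"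
    unfolding gauss_lr_def exp_add[symmetric] by simp
  then show ?thesis
    unfolding normal_density_def by (simp only: mult.assoc)
qed

lemma gauss_lr_sq: "(gauss_lr \<sigma> a c y)\<^sup>2 = exp (c\<^sup>2 / \<sigma>\<^sup>2) * gauss_lr \<sigma> a (2 * c) y"
  unfolding gauss_lr_def power2_eq_square exp_add[symmetric]
  by (rule arg_cong[where f=exp]) (cases "\<sigma> = 0"; simp add: field_simps power2_eq_square)

lemma gauss_lr_mult_neg: "gauss_lr \<sigma> a c y * gauss_lr \<sigma> a (- c) y = exp (- (c\<^sup>2 / \<sigma>\<^sup>2))"
  unfolding gauss_lr_def exp_add[symmetric]
  by (rule arg_cong[where f=exp]) (cases "\<sigma> = 0"; simp add: field_simps power2_eq_square)

lemma
  assumes "0 < \<sigma>"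
  shows integrable_normal_density_gauss_lr:
      "integrable lborel (\<lambda>y. normal_density a \<sigma> y * gauss_lr \<sigma> a c y)"
    and integral_normal_density_gauss_lr:
      "(\<integral>y. normal_density a \<sigma> y * gauss_lr \<sigma> a c y \<partial>lborel) = 1"
  by (simp_all add: normal_density_shift[OF assms, symmetric]
      integrable_normal_density[OF assms] integral_normal_density[OF assms])

lemma nn_integral_density_normal:
  assumes "w \<in> borel_measurable borel" "integrable lborel (\<lambda>y. normal_density a \<sigma> y * w y)"
    and "\<And>y. 0 \<le> w y"
  shows "(\<integral>\<^sup>+ y. w y \<partial>density lborel (normal_density a \<sigma>))
     = (\<integral>y. normal_density a \<sigma> y * w y \<partial>lborel)"
proof -
  have "(\<integral>\<^sup>+ y. w y \<partial>density lborel (normal_density a \<sigma>))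
      = (\<integral>\<^sup>+ y. ennreal (normal_density a \<sigma> y * w y) \<partial>lborel)"
    using assms(1) by (subst nn_integral_density) (auto simp: ennreal_mult')
  also have "\<dots> = (\<integral>y. normal_density a \<sigma> y * w y \<partial>lborel)"
    using assms by (intro nn_integral_eq_integral) auto
  finally show ?thesis .
qed

lemma nn_integral_gauss_lr:
  assumes "0 < \<sigma>"
  shows "(\<integral>\<^sup>+ y. gauss_lr \<sigma> a c y \<partial>density lborel (normal_density a \<sigma>)) = 1"
  using assms gauss_lr_pos[THEN less_imp_le]
  by (simp add: nn_integral_density_normal integrable_normal_density_gauss_lr
      integral_normal_density_gauss_lr)

definition gauss_lr_sym :: "real \<Rightarrow> real \<Rightarrow> real \<Rightarrow> real \<Rightarrow> real" where
  "gauss_lr_sym \<sigma> a c y = (gauss_lr \<sigma> a c y + gauss_lr \<sigma> a (- c) y) / 2"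

lemma gauss_lr_sym_pos: "0 < gauss_lr_sym \<sigma> a c y"
  by (simp add: gauss_lr_sym_def gauss_lr_pos add_pos_pos)

lemma borel_measurable_gauss_lr_sym [measurable]: "gauss_lr_sym \<sigma> a c \<in> borel_measurable borel"
  unfolding gauss_lr_sym_def[abs_def] by simp

lemma nn_integral_gauss_lr_sym:
  assumes "0 < \<sigma>"
  shows "(\<integral>\<^sup>+ y. gauss_lr_sym \<sigma> a c y \<partial>density lborel (normal_density a \<sigma>)) = 1"
proof -
  have eq: "normal_density a \<sigma> y * gauss_lr_sym \<sigma> a c y
      = (normal_density a \<sigma> y * gauss_lr \<sigma> a c y) / 2 + (normal_density a \<sigma> y * gauss_lr \<sigma> a (- c) y) / 2"
    for y by (simp add: gauss_lr_sym_def field_simps)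
  show ?thesis
    using assms gauss_lr_sym_pos[THEN less_imp_le]
    by (subst nn_integral_density_normal)
      (simp_all add: eq integrable_normal_density_gauss_lr integral_normal_density_gauss_lr)
qed

lemma nn_integral_gauss_lr_sym_sq:
  assumes "0 < \<sigma>"
  shows "(\<integral>\<^sup>+ y. (gauss_lr_sym \<sigma> a c y)\<^sup>2 \<partial>density lborel (normal_density a \<sigma>))
     = cosh (c\<^sup>2 / \<sigma>\<^sup>2)"
proof -
  define x where "x = c\<^sup>2 / \<sigma>\<^sup>2"
  have eq: "normal_density a \<sigma> y * (gauss_lr_sym \<sigma> a c y)\<^sup>2 =
     (exp x / 4) * (normal_density a \<sigma> y * gauss_lr \<sigma> a (2 * c) y)
     + (exp x / 4) * (normal_density a \<sigma> y * gauss_lr \<sigma> a (- (2 * c)) y)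
     + (exp (-x) / 2) * normal_density a \<sigma> y" for y
  proof -
    have "(gauss_lr_sym \<sigma> a c y)\<^sup>2 = ((gauss_lr \<sigma> a c y)\<^sup>2
        + 2 * (gauss_lr \<sigma> a c y * gauss_lr \<sigma> a (- c) y) + (gauss_lr \<sigma> a (-c) y)\<^sup>2) / 4"
      unfolding gauss_lr_sym_def by (simp add: power2_eq_square field_simps)
    then show ?thesis
      by (simp add: gauss_lr_sq gauss_lr_mult_neg x_def field_simps)
  qed
  show ?thesis
    using assms
    by (subst nn_integral_density_normal)
      (simp_all add: eq integrable_normal_density_gauss_lr integral_normal_density_gauss_lr
        cosh_field_def x_def add_divide_distrib)
qed

section \<open>Mixtures of sign perturbations in the sequence model\<close>

definition gauss_seq :: "real \<Rightarrow> (nat \<Rightarrow> real) \<Rightarrow> (nat \<Rightarrow> real) measure" where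
  "gauss_seq \<sigma> f = (\<Pi>\<^sub>M i\<in>UNIV. density lborel (normal_density (f i) \<sigma>))"

lemma Pr_eq_gauss_seq: "Pr n F = gauss_seq (1 / sqrt (real n)) F"
  by (simp add: Pr_def gauss_seq_def)

lemma prob_space_gauss_seq: "0 < \<sigma> \<Longrightarrow> prob_space (gauss_seq \<sigma> f)"
  unfolding gauss_seq_def by (intro prob_space_PiM prob_space_normal_density)

lemma sets_gauss_seq [measurable_cong]: "sets (gauss_seq \<sigma> f) = sets Ysp"
  unfolding gauss_seq_def Ysp_def by (intro sets_PiM_cong) auto

lemma measurable_Ysp_component [measurable]: "(\<lambda>y. y i) \<in> borel_measurable Ysp"
  by (simp add: Ysp_def)

lemma space_gauss_seq: "space (gauss_seq \<sigma> f) = space Ysp"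
  unfolding gauss_seq_def Ysp_def space_PiM by simp

definition perturb :: "(nat \<Rightarrow> real) \<Rightarrow> nat set \<Rightarrow> real \<Rightarrow> (nat \<Rightarrow> real) \<Rightarrow> (nat \<Rightarrow> real)" where
  "perturb f Fs \<rho> \<theta> = (\<lambda>i. f i + (if i \<in> Fs then \<theta> i * \<rho> else 0))"

abbreviation signs :: "nat set \<Rightarrow> (nat \<Rightarrow> real) set" where
  "signs Fs \<equiv> Pi\<^sub>E Fs (\<lambda>_. {-1, 1})"

lemma gauss_seq_perturb:
  assumes \<sigma>: "0 < \<sigma>" and Fs: "finite Fs"
  shows "gauss_seq \<sigma> (perturb f Fs \<rho> \<theta>)
    = density (gauss_seq \<sigma> f) (\<lambda>y. \<Prod>i\<in>Fs. ennreal (gauss_lr \<sigma> (f i) (\<theta> i * \<rho>) (y i)))"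
proof -
  define M where "M i = density lborel (normal_density (f i) \<sigma>)" for i
  interpret M: prob_space "M i" for i
    unfolding M_def using \<sigma> by (rule prob_space_normal_density)
  interpret product_prob_space M UNIV by unfold_locales
  have "density lborel (normal_density (perturb f Fs \<rho> \<theta> i) \<sigma>)
      = (if i \<in> Fs then density (M i) (gauss_lr \<sigma> (f i) (\<theta> i * \<rho>)) else M i)" for i
  proof (cases "i \<in> Fs")
    case True
    have "density (M i) (gauss_lr \<sigma> (f i) (\<theta> i * \<rho>))
        = density lborel (\<lambda>x. ennreal (normal_density (f i) \<sigma> x) * gauss_lr \<sigma> (f i) (\<theta> i * \<rho>) x)"
      unfolding M_def by (rule density_density_eq) auto
    also have "\<dots> = density lborel (normal_density (perturb f Fs \<rho> \<theta> i) \<sigma>)"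
      using True \<sigma> by (intro density_cong) (auto simp: perturb_def normal_density_shift ennreal_mult')
    finally show ?thesis using True by simp
  qed (simp add: perturb_def M_def)
  then have "gauss_seq \<sigma> (perturb f Fs \<rho> \<theta>)
      = PiM UNIV (\<lambda>i. if i \<in> Fs then density (M i) (gauss_lr \<sigma> (f i) (\<theta> i * \<rho>)) else M i)"
    by (simp add: gauss_seq_def)
  also have "\<dots> = density (PiM UNIV M) (\<lambda>y. \<Prod>i\<in>Fs. ennreal (gauss_lr \<sigma> (f i) (\<theta> i * \<rho>) (y i)))"
    using Fs \<sigma> by (intro PiM_density_prod_finite) (auto simp: M_def nn_integral_gauss_lr)
  finally show ?thesis
    by (simp add: gauss_seq_def M_def[abs_def])
qed

lemma nn_integral_gauss_seq_prod:
  assumes "0 < \<sigma>" "finite Fs" "\<And>i. i \<in> Fs \<Longrightarrow> h i \<in> borel_measurable borel"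
  shows "(\<integral>\<^sup>+ y. (\<Prod>i\<in>Fs. h i (y i)) \<partial>gauss_seq \<sigma> f)
    = (\<Prod>i\<in>Fs. \<integral>\<^sup>+ x. h i x \<partial>density lborel (normal_density (f i) \<sigma>))"
proof -
  interpret M: prob_space "density lborel (normal_density (f i) \<sigma>)" for i
    using assms(1) by (rule prob_space_normal_density)
  interpret product_prob_space "\<lambda>i. density lborel (normal_density (f i) \<sigma>)" UNIV
    by unfold_locales
  show ?thesis
    using assms unfolding gauss_seq_def by (intro nn_integral_PiM_prod_finite) auto
qed

definition mixture_lr :: "real \<Rightarrow> (nat \<Rightarrow> real) \<Rightarrow> nat set \<Rightarrow> real \<Rightarrow> (nat \<Rightarrow> real) \<Rightarrow> real" where
  "mixture_lr \<sigma> f Fs \<rho> y = (\<Prod>i\<in>Fs. gauss_lr_sym \<sigma> (f i) \<rho> (y i))"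

lemma mixture_lr_pos: "0 < mixture_lr \<sigma> f Fs \<rho> y"
  by (simp add: mixture_lr_def prod_pos gauss_lr_sym_pos)

lemma borel_measurable_mixture_lr [measurable]: "mixture_lr \<sigma> f Fs \<rho> \<in> borel_measurable Ysp"
  unfolding mixture_lr_def[abs_def] by measurable

lemma
  assumes "0 < \<sigma>" "finite Fs"
  shows nn_integral_mixture_lr: "(\<integral>\<^sup>+ y. mixture_lr \<sigma> f Fs \<rho> y \<partial>gauss_seq \<sigma> f) = 1"
    and nn_integral_mixture_lr_sq:
      "(\<integral>\<^sup>+ y. (mixture_lr \<sigma> f Fs \<rho> y)\<^sup>2 \<partial>gauss_seq \<sigma> f) = cosh (\<rho>\<^sup>2 / \<sigma>\<^sup>2) ^ card Fs"
proof -
  have "(\<integral>\<^sup>+ y. mixture_lr \<sigma> f Fs \<rho> y \<partial>gauss_seq \<sigma> f)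
      = (\<integral>\<^sup>+ y. (\<Prod>i\<in>Fs. ennreal (gauss_lr_sym \<sigma> (f i) \<rho> (y i))) \<partial>gauss_seq \<sigma> f)"
    by (simp add: mixture_lr_def prod_ennreal gauss_lr_sym_pos less_imp_le)
  also have "\<dots> = 1"
    using assms
    by (subst nn_integral_gauss_seq_prod[where h="\<lambda>i x. gauss_lr_sym \<sigma> (f i) \<rho> x"])
      (simp_all add: nn_integral_gauss_lr_sym)
  finally show "(\<integral>\<^sup>+ y. mixture_lr \<sigma> f Fs \<rho> y \<partial>gauss_seq \<sigma> f) = 1" .
  have "(\<integral>\<^sup>+ y. (mixture_lr \<sigma> f Fs \<rho> y)\<^sup>2 \<partial>gauss_seq \<sigma> f)
      = (\<integral>\<^sup>+ y. (\<Prod>i\<in>Fs. ennreal ((gauss_lr_sym \<sigma> (f i) \<rho> (y i))\<^sup>2)) \<partial>gauss_seq \<sigma> f)"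
    by (simp add: mixture_lr_def prod_ennreal prod_power_distrib)
  also have "\<dots> = cosh (\<rho>\<^sup>2 / \<sigma>\<^sup>2) ^ card Fs"
    using assms
    by (subst nn_integral_gauss_seq_prod[where h="\<lambda>i x. (gauss_lr_sym \<sigma> (f i) \<rho> x)\<^sup>2"])
      (simp_all add: nn_integral_gauss_lr_sym_sq ennreal_power)
  finally show "(\<integral>\<^sup>+ y. (mixture_lr \<sigma> f Fs \<rho> y)\<^sup>2 \<partial>gauss_seq \<sigma> f) = cosh (\<rho>\<^sup>2 / \<sigma>\<^sup>2) ^ card Fs" .
qed

lemma
  assumes "0 < \<sigma>" "finite Fs"
  shows integrable_mixture_lr: "integrable (gauss_seq \<sigma> f) (mixture_lr \<sigma> f Fs \<rho>)"
    and integral_mixture_lr: "(\<integral>y. mixture_lr \<sigma> f Fs \<rho> y \<partial>gauss_seq \<sigma> f) = 1"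
    and integrable_mixture_lr_sq: "integrable (gauss_seq \<sigma> f) (\<lambda>y. (mixture_lr \<sigma> f Fs \<rho> y)\<^sup>2)"
    and integral_mixture_lr_sq:
      "(\<integral>y. (mixture_lr \<sigma> f Fs \<rho> y)\<^sup>2 \<partial>gauss_seq \<sigma> f) = cosh (\<rho>\<^sup>2 / \<sigma>\<^sup>2) ^ card Fs"
  using nn_integral_mixture_lr[OF assms] nn_integral_mixture_lr_sq[OF assms] mixture_lr_pos[THEN less_imp_le]
  by (auto intro!: integrableI_nn_integral_finite simp: integral_eq_nn_integral)

lemma sum_measure_gauss_seq_perturb:
  assumes \<sigma>: "0 < \<sigma>" and Fs: "finite Fs" and E: "E \<in> sets Ysp"
  shows "(\<Sum>\<theta>\<in>signs Fs. measure (gauss_seq \<sigma> (perturb f Fs \<rho> \<theta>)) E)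
    = 2 ^ card Fs * (\<integral>y. mixture_lr \<sigma> f Fs \<rho> y * indicator E y \<partial>gauss_seq \<sigma> f)"
proof -
  define g where "g \<theta> y = (\<Prod>i\<in>Fs. ennreal (gauss_lr \<sigma> (f i) (\<theta> i * \<rho>) (y i)))"
    for \<theta> and y :: "nat \<Rightarrow> real"
  have g_meas: "g \<theta> \<in> borel_measurable (gauss_seq \<sigma> f)" for \<theta>
    unfolding g_def[abs_def] by measurable
  have sum_g: "(\<Sum>\<theta>\<in>signs Fs. g \<theta> y) = ennreal (2 ^ card Fs * mixture_lr \<sigma> f Fs \<rho> y)" for y
  proof -
    have "(\<Sum>\<theta>\<in>signs Fs. g \<theta> y)
        = (\<Prod>i\<in>Fs. \<Sum>t\<in>{-1, 1}. ennreal (gauss_lr \<sigma> (f i) (t * \<rho>) (y i)))"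
      unfolding g_def using Fs by (subst prod_sum_PiE) auto
    also have "\<dots> = (\<Prod>i\<in>Fs. ennreal (2 * gauss_lr_sym \<sigma> (f i) \<rho> (y i)))"
    proof (intro prod.cong refl)
      fix i
      have "2 * gauss_lr_sym \<sigma> (f i) \<rho> (y i) = gauss_lr \<sigma> (f i) (- \<rho>) (y i) + gauss_lr \<sigma> (f i) \<rho> (y i)"
        by (simp add: gauss_lr_sym_def)
      then show "(\<Sum>t\<in>{-1, 1}. ennreal (gauss_lr \<sigma> (f i) (t * \<rho>) (y i)))
          = ennreal (2 * gauss_lr_sym \<sigma> (f i) \<rho> (y i))"
        by (simp add: gauss_lr_pos less_imp_le)
    qed
    also have "\<dots> = ennreal (2 ^ card Fs * mixture_lr \<sigma> f Fs \<rho> y)"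
      by (simp add: prod_ennreal gauss_lr_sym_pos less_imp_le prod.distrib mixture_lr_def)
    finally show ?thesis .
  qed
  have em: "emeasure (gauss_seq \<sigma> (perturb f Fs \<rho> \<theta>)) E = (\<integral>\<^sup>+ y. g \<theta> y * indicator E y \<partial>gauss_seq \<sigma> f)"
    for \<theta>
    using E g_meas by (simp add: gauss_seq_perturb[OF \<sigma> Fs] g_def[symmetric] emeasure_density)
  interpret prob_space "gauss_seq \<sigma> f'" for f'
    using \<sigma> by (rule prob_space_gauss_seq)
  have "ennreal (\<Sum>\<theta>\<in>signs Fs. measure (gauss_seq \<sigma> (perturb f Fs \<rho> \<theta>)) E)
      = (\<Sum>\<theta>\<in>signs Fs. \<integral>\<^sup>+ y. g \<theta> y * indicator E y \<partial>gauss_seq \<sigma> f)"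
    by (simp add: em emeasure_eq_measure[symmetric] sum_ennreal[symmetric] del: sum_ennreal)
  also have "\<dots> = (\<integral>\<^sup>+ y. (\<Sum>\<theta>\<in>signs Fs. g \<theta> y * indicator E y) \<partial>gauss_seq \<sigma> f)"
    using g_meas E by (subst nn_integral_sum) auto
  also have "\<dots> = (\<integral>\<^sup>+ y. ennreal (2 ^ card Fs * (mixture_lr \<sigma> f Fs \<rho> y * indicator E y)) \<partial>gauss_seq \<sigma> f)"
    by (intro nn_integral_cong)
      (simp add: sum_distrib_right[symmetric] sum_g ennreal_mult'[symmetric] mult.assoc split: split_indicator)
  also have "\<dots> = ennreal (2 ^ card Fs * (\<integral>y. mixture_lr \<sigma> f Fs \<rho> y * indicator E y \<partial>gauss_seq \<sigma> f))"
    using E integrable_mixture_lr[OF \<sigma> Fs]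
    by (subst nn_integral_eq_integral)
      (auto intro!: integrable_real_mult_indicator simp: sets_gauss_seq mixture_lr_pos less_imp_le)
  finally show ?thesis
    by (rule ennreal_inj[THEN iffD1, rotated 2])
      (auto intro!: sum_nonneg integral_nonneg_AE simp: mixture_lr_pos less_imp_le)
qed

lemma (in prob_space) prob_le_likelihood_ratio:
  assumes E: "E \<in> events" and L: "integrable M L" "integrable M (\<lambda>y. (L y)\<^sup>2)"
    and L1: "expectation L = 1" and lam: "0 < lam"
  shows "prob E \<le> expectation (\<lambda>y. L y * indicator E y) + lam / 2
      + (expectation (\<lambda>y. (L y)\<^sup>2) - 1) / (2 * lam)"
proof -
  have pointwise: "indicator E y \<le> L y * indicator E y + lam / 2 + (L y - 1)\<^sup>2 / (2 * lam)" for y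
  proof -
    have "0 \<le> (1 - L y - lam)\<^sup>2" by simp
    then have "1 - L y \<le> lam / 2 + (L y - 1)\<^sup>2 / (2 * lam)"
      using lam by (simp add: field_simps power2_eq_square)
    moreover have "0 \<le> lam / 2 + (L y - 1)\<^sup>2 / (2 * lam)"
      using lam by simp
    ultimately show ?thesis by (cases "y \<in> E") auto
  qed
  have int_LE: "integrable M (\<lambda>y. L y * indicator E y)"
    using E L(1) by (rule integrable_real_mult_indicator)
  have "prob E = expectation (indicator E)"
    using E by simp
  also have "\<dots> \<le> expectation (\<lambda>y. L y * indicator E y + lam / 2 + (L y - 1)\<^sup>2 / (2 * lam))"
    using E L int_LE pointwise
    by (intro integral_mono) (auto simp: power2_diff less_top[symmetric])
  also have "\<dots> = expectation (\<lambda>y. L y * indicator E y) + lam / 2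
      + (expectation (\<lambda>y. (L y)\<^sup>2) - 1) / (2 * lam)"
    using L L1 int_LE by (simp add: power2_diff integral_add integral_diff prob_space)
  finally show ?thesis .
qed

lemma measure_gauss_seq_le_mixture:
  assumes \<sigma>: "0 < \<sigma>" and Fs: "finite Fs" and E: "E \<in> sets Ysp" and lam: "0 < lam"
  shows "measure (gauss_seq \<sigma> f) E
    \<le> (\<Sum>\<theta>\<in>signs Fs. measure (gauss_seq \<sigma> (perturb f Fs \<rho> \<theta>)) E) / 2 ^ card Fs
      + lam / 2 + (cosh (\<rho>\<^sup>2 / \<sigma>\<^sup>2) ^ card Fs - 1) / (2 * lam)"
proof -
  interpret prob_space "gauss_seq \<sigma> f"
    using \<sigma> by (rule prob_space_gauss_seq)
  show ?thesis
    using prob_le_likelihood_ratio[of E "mixture_lr \<sigma> f Fs \<rho>" lam] E lam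
    by (simp add: sets_gauss_seq sum_measure_gauss_seq_perturb[OF \<sigma> Fs E] integrable_mixture_lr[OF \<sigma> Fs]
        integral_mixture_lr[OF \<sigma> Fs] integrable_mixture_lr_sq[OF \<sigma> Fs] integral_mixture_lr_sq[OF \<sigma> Fs])
qed

section \<open>Lacunary sequences and their block perturbations\<close>

definition lacunary :: "real \<Rightarrow> nat \<Rightarrow> real" where
  "lacunary t i = (if \<exists>j::nat. i + 1 = 2 ^ j then real (i + 1) powr (- t) else 0)"

lemma lacunary_pow2: "lacunary t (2 ^ j - 1) = 2 powr (- t * real j)"
proof -
  have "lacunary t (2 ^ j - 1) = real ((2::nat) ^ j) powr (- t)"
    unfolding lacunary_def by auto
  also have "\<dots> = 2 powr (- t * real j)"
    by (simp add: powr_realpow[symmetric] powr_powr mult.commute)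
  finally show ?thesis .
qed

lemma lacunary_sobolev_sums:
  assumes "s < t"
  shows "(\<lambda>i. (lacunary t i)\<^sup>2 * real (i + 1) powr (2 * s)) sums (1 / (1 - 2 powr (2 * (s - t))))"
proof -
  define g where "g j = (2::nat) ^ j - 1" for j
  have mono: "strict_mono g"
    unfolding g_def by (simp add: less_diff_iff strict_monoI)
  have zero: "(lacunary t i)\<^sup>2 * real (i + 1) powr (2 * s) = 0" if "i \<notin> range g" for i
  proof -
    have "i + 1 \<noteq> 2 ^ j" for j
    proof
      assume "i + 1 = 2 ^ j"
      then have "i = g j"
        by (simp add: g_def)
      with that show False
        by blast
    qed
    then show ?thesis
      by (simp add: lacunary_def)
  qed
  have geometric: "(lacunary t (g j))\<^sup>2 * real (g j + 1) powr (2 * s) = (2 powr (2 * (s - t))) ^ j" for j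
  proof -
    have "(lacunary t (g j))\<^sup>2 = 2 powr (- 2 * t * real j)"
      unfolding g_def lacunary_pow2 power2_eq_square powr_add[symmetric] by (simp add: mult.assoc)
    moreover have "real (g j + 1) powr (2 * s) = 2 powr (2 * s * real j)"
      unfolding g_def by (simp add: powr_realpow[symmetric] powr_powr mult.commute)
    moreover have "(2 powr (2 * (s - t))) ^ j = 2 powr (2 * (s - t) * real j)"
      by (simp add: powr_realpow[symmetric] powr_powr)
    ultimately show ?thesis
      by (simp add: powr_add[symmetric] algebra_simps)
  qed
  have "2 powr (2 * (s - t)) < 1"
    using assms by (simp add: powr_less_one)
  then have "(\<lambda>j. (lacunary t (g j))\<^sup>2 * real (g j + 1) powr (2 * s)) sums (1 / (1 - 2 powr (2 * (s - t))))"
    unfolding geometric using geometric_sums[of "2 powr (2 * (s - t))"] by (simp add: divide_inverse)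
  then show ?thesis
    using sums_mono_reindex[OF mono, of "\<lambda>i. (lacunary t i)\<^sup>2 * real (i + 1) powr (2 * s)"] zero by blast
qed

lemma band_sum_ge_lacunary:
  fixes F :: "nat \<Rightarrow> real" and J :: nat
  assumes F: "\<And>j. F (2 ^ j - 1) = 2 powr (- t * real j)" and \<epsilon>: "0 < \<epsilon>" "\<epsilon> < 1" and t: "0 < t"
  shows "band_sum F (2 powr (real J * (1 - \<epsilon>))) (2 powr real J) \<ge> 2 powr (- 2 * t * (real J * (1 - \<epsilon>) + 1))"
proof -
  define x where "x = real J * (1 - \<epsilon>)"
  define j where "j = nat \<lceil>x\<rceil>"
  have "0 \<le> x" "x \<le> real J"
    using \<epsilon> by (simp_all add: x_def mult_left_le)
  then have jx: "x \<le> real j" "real j \<le> x + 1" and jJ: "j \<le> J"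
    unfolding j_def by linarith+
  define S where
    "S = {k::nat. real_of_int \<lceil>2 powr x\<rceil> \<le> real k \<and> real k \<le> real_of_int \<lfloor>2 powr real J\<rfloor> \<and> 1 \<le> k}"
  have floor_eq: "\<lfloor>2 powr real J\<rfloor> = int (2 ^ J)"
    by (simp add: powr_realpow)
  have "finite S"
    by (rule finite_subset[of _ "{..2 ^ J}"]) (auto simp: S_def floor_eq)
  moreover have "2 ^ j \<in> S"
  proof -
    have "2 powr x \<le> real ((2::nat) ^ j)"
      using jx by (simp add: powr_realpow[symmetric])
    moreover have "(2::nat) ^ j \<le> 2 ^ J"
      using jJ by (simp add: power_increasing)
    ultimately show ?thesis
      unfolding S_def floor_eq by (simp add: ceiling_le_iff)
  qed
  ultimately have "(F (2 ^ j - 1))\<^sup>2 \<le> band_sum F (2 powr x) (2 powr real J)"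
    unfolding band_sum_def S_def[symmetric] by (intro member_le_sum) auto
  moreover have "(F (2 ^ j - 1))\<^sup>2 = 2 powr (- 2 * t * real j)"
    unfolding F power2_eq_square powr_add[symmetric] by (simp add: mult.assoc)
  moreover have "2 powr (- 2 * t * (x + 1)) \<le> 2 powr (- 2 * t * real j)"
    using jx t by (intro powr_mono) auto
  ultimately show ?thesis
    unfolding x_def by linarith
qed

lemma S_class_memI:
  fixes F :: "nat \<Rightarrow> real"
  assumes F: "\<And>j. F (2 ^ j - 1) = 2 powr (- t * real j)" and \<epsilon>: "0 < \<epsilon>" "\<epsilon> < 1" and t: "0 < t"
    and s: "0 < s"
    and sums: "(\<lambda>i. (F i)\<^sup>2 * real (i + 1) powr (2 * s)) sums V" and V: "1 \<le> V" "V \<le> Q"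
    and b: "0 < b" "b \<le> 1" and B: "sqrt Q \<le> B"
    and band: "\<And>J. J \<ge> J0 \<Longrightarrow> c_const s * Q * 2 powr (- 2 * real J * s) \<le> 2 powr (- 2 * t * (real J * (1 - \<epsilon>) + 1))"
  shows "F \<in> S_class s \<epsilon> b B J0"
proof -
  have summable: "summable (\<lambda>i. (F i)\<^sup>2 * real (i + 1) powr (2 * s))"
    using sums by (rule sums_summable)
  have "summable (\<lambda>i. (F i)\<^sup>2)"
  proof (rule summable_comparison_test[OF _ summable], intro exI allI impI)
    fix i :: nat
    have "1 \<le> real (i + 1) powr (2 * s)"
      using s by (intro ge_one_powr_ge_zero) auto
    then show "norm ((F i)\<^sup>2) \<le> (F i)\<^sup>2 * real (i + 1) powr (2 * s)"
      by (simp add: mult_le_cancel_left1)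
  qed
  moreover have norm: "sobolev_norm s F = sqrt V"
    unfolding sobolev_norm_def using sums by (simp add: sums_unique[symmetric])
  moreover have "c_const s * (sobolev_norm s F)\<^sup>2 * 2 powr (- 2 * real J * s)
      \<le> band_sum F (2 powr (real J * (1 - \<epsilon>))) (2 powr real J)" if "J \<ge> J0" for J
  proof -
    have "c_const s * (sobolev_norm s F)\<^sup>2 * 2 powr (- 2 * real J * s) \<le> c_const s * Q * 2 powr (- 2 * real J * s)"
      unfolding norm using V by (simp add: c_const_def)
    also have "\<dots> \<le> 2 powr (- 2 * t * (real J * (1 - \<epsilon>) + 1))"
      using band that .
    also have "\<dots> \<le> band_sum F (2 powr (real J * (1 - \<epsilon>))) (2 powr real J)"
      using band_sum_ge_lacunary[OF F \<epsilon> t] .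
    finally show ?thesis .
  qed
  moreover have "b \<le> sqrt V" "sqrt V \<le> B"
    using b V B by (auto intro: order_trans[OF _ real_sqrt_ge_one] order_trans[OF real_sqrt_le_mono])
  ultimately show ?thesis
    unfolding S_class_def l2_def using summable by auto
qed

text \<open>In the paper's indexing, \<open>block p\<close> consists of the \<open>k\<close> with \<open>2^p < k < 2^(p+1)\<close>,
  so it avoids the support of \<open>lacunary t\<close>.\<close>

definition block :: "nat \<Rightarrow> nat set" where
  "block p = {2 ^ p ..< 2 ^ Suc p - 1}"

definition block_amp_sq :: "real \<Rightarrow> nat \<Rightarrow> real" where
  "block_amp_sq s p = 2 powr (- (real p * (2 * s + 1) + 2 * s))"

lemma block_not_pow2:
  assumes "i \<in> block p"
  shows "i + 1 \<noteq> 2 ^ j"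
proof
  assume eq: "i + 1 = 2 ^ j"
  from assms have "(2::nat) ^ p < 2 ^ j" "(2::nat) ^ j < 2 ^ Suc p"
    unfolding block_def eq[symmetric] by auto
  then have "p < j" "j < Suc p"
    by (meson nat_power_less_imp_less pos2)+
  then show False by simp
qed

lemma finite_block: "finite (block p)"
  by (simp add: block_def)

lemma card_block: "card (block p) = 2 ^ p - 1"
  by (simp add: block_def)

lemma signs_sq: "\<theta> \<in> signs Fs \<Longrightarrow> i \<in> Fs \<Longrightarrow> (\<theta> i)\<^sup>2 = 1"
  by (auto simp: PiE_iff)

lemma perturb_lacunary_pow2: "perturb (lacunary t) (block p) \<rho> \<theta> (2 ^ j - 1) = 2 powr (- t * real j)"
proof -
  have "2 ^ j - 1 \<notin> block p"
    using block_not_pow2[of "2 ^ j - 1" p j] by auto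
  then show ?thesis
    using lacunary_pow2[of t j] by (simp add: perturb_def)
qed

lemma perturb_lacunary_sobolev_sums:
  assumes \<theta>: "\<theta> \<in> signs (block p)" and s: "s < t"
  shows "(\<lambda>i. (perturb (lacunary t) (block p) \<rho> \<theta> i)\<^sup>2 * real (i + 1) powr (2 * s)) sums
     (1 / (1 - 2 powr (2 * (s - t))) + (\<Sum>i\<in>block p. \<rho>\<^sup>2 * real (i + 1) powr (2 * s)))"
proof -
  have "(perturb (lacunary t) (block p) \<rho> \<theta> i)\<^sup>2 * real (i + 1) powr (2 * s)
      = (lacunary t i)\<^sup>2 * real (i + 1) powr (2 * s)
        + (if i \<in> block p then \<rho>\<^sup>2 * real (i + 1) powr (2 * s) else 0)" for i
    using signs_sq[OF \<theta>, of i] block_not_pow2[of i p]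
    by (auto simp: perturb_def lacunary_def power_mult_distrib)
  then show ?thesis
    by (simp only:) (intro sums_add lacunary_sobolev_sums s sums_If_finite_set finite_block)
qed

lemma sum_block_weight_le:
  assumes s: "0 < s"
  shows "(\<Sum>i\<in>block p. block_amp_sq s p * real (i + 1) powr (2 * s)) \<le> 1"
proof -
  have "real (i + 1) powr (2 * s) \<le> 2 powr (2 * s * (real p + 1))" if "i \<in> block p" for i
  proof -
    have "i + 1 \<le> 2 ^ Suc p"
      using that by (auto simp: block_def)
    then have "real (i + 1) \<le> 2 ^ Suc p"
      by (metis of_nat_le_iff of_nat_numeral of_nat_power)
    moreover have "(2::real) powr (real p + 1) = 2 ^ Suc p"
      using powr_realpow[of 2 "Suc p"] by (simp add: add.commute)
    ultimately have "real (i + 1) \<le> 2 powr (real p + 1)"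
      by simp
    then have "real (i + 1) powr (2 * s) \<le> (2 powr (real p + 1)) powr (2 * s)"
      using s by (intro powr_mono2) auto
    then show ?thesis
      by (simp add: powr_powr mult.commute)
  qed
  then have "(\<Sum>i\<in>block p. block_amp_sq s p * real (i + 1) powr (2 * s))
      \<le> (\<Sum>i\<in>block p. block_amp_sq s p * 2 powr (2 * s * (real p + 1)))"
    by (intro sum_mono mult_left_mono) (auto simp: block_amp_sq_def)
  also have "\<dots> = real (2 ^ p - 1) * (block_amp_sq s p * 2 powr (2 * s * (real p + 1)))"
    by (simp add: card_block)
  also have "\<dots> \<le> 2 powr real p * (block_amp_sq s p * 2 powr (2 * s * (real p + 1)))"
    by (intro mult_right_mono) (auto simp: powr_realpow block_amp_sq_def)
  also have "\<dots> = 1"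
    unfolding block_amp_sq_def powr_add[symmetric] by (simp add: algebra_simps)
  finally show ?thesis .
qed

lemma l2_dist_perturb:
  assumes "\<theta> \<in> signs Fs" and "finite Fs"
  shows "l2_dist f (perturb f Fs \<rho> \<theta>) = sqrt (real (card Fs) * \<rho>\<^sup>2)"
proof -
  have eq: "(f i - perturb f Fs \<rho> \<theta> i)\<^sup>2 = (if i \<in> Fs then \<rho>\<^sup>2 else 0)" for i
    using signs_sq[OF assms(1), of i] by (simp add: perturb_def power_mult_distrib)
  have "(\<lambda>i. (f i - perturb f Fs \<rho> \<theta> i)\<^sup>2) sums (\<Sum>i\<in>Fs. \<rho>\<^sup>2)"
    unfolding eq by (rule sums_If_finite_set[OF assms(2)])
  then show ?thesis
    unfolding l2_dist_def by (simp add: sums_unique[symmetric])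
qed

section \<open>Choice of the parameters\<close>

lemma cosh_pow_le:
  fixes x u :: real
  assumes x: "0 \<le> x" and mu: "real m * x\<^sup>2 \<le> u" and u: "u \<le> 1"
  shows "cosh x ^ m \<le> 1 + 2 * u"
proof (cases "m = 0")
  case True
  then show ?thesis
    using mu by simp
next
  case False
  then have "x\<^sup>2 \<le> real m * x\<^sup>2"
    by (simp add: mult_le_cancel_right1)
  then have "x\<^sup>2 \<le> 1"
    using mu u by linarith
  then have x1: "x \<le> 1"
    using x by (simp add: power_le_one_iff abs_le_square_iff)
  have "exp (- x) \<le> 1 - x + x\<^sup>2"
  proof -
    have "1 \<le> (1 - x + x\<^sup>2) * (1 + x)"
      using x by (simp add: algebra_simps power2_eq_square power3_eq_cube)
    then have "1 / (1 + x) \<le> 1 - x + x\<^sup>2"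
      using x by (simp add: field_simps)
    moreover have "exp (- x) \<le> 1 / (1 + x)"
      using exp_ge_add_one_self[of x] x by (simp add: exp_minus field_simps)
    ultimately show ?thesis by linarith
  qed
  then have "cosh x \<le> 1 + x\<^sup>2"
    using exp_bound[OF x x1] by (simp add: cosh_field_def)
  then have "cosh x ^ m \<le> (1 + x\<^sup>2) ^ m"
    by (intro power_mono) auto
  also have "\<dots> \<le> exp (x\<^sup>2) ^ m"
    by (intro power_mono) (auto simp: add.commute)
  also have "\<dots> = exp (real m * x\<^sup>2)"
    by (simp add: exp_of_nat_mult[symmetric])
  also have "\<dots> \<le> 1 + real m * x\<^sup>2 + (real m * x\<^sup>2)\<^sup>2"
    using mu u by (intro exp_bound) auto
  also have "\<dots> \<le> 1 + 2 * u"
    using mu u mult_left_le[of "real m * x\<^sup>2" "real m * x\<^sup>2"] by (simp add: power2_eq_square)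
  finally show ?thesis .
qed

lemma sqrt_card_block_amp_sq_ge:
  assumes "1 \<le> p"
  shows "2 powr (- (s * real p + s + 1 / 2)) \<le> sqrt (real (card (block p)) * block_amp_sq s p)"
proof -
  have "2 powr (real p - 1) = real ((2::nat) ^ (p - 1))"
    using assms by (simp add: powr_realpow[symmetric])
  also have "\<dots> \<le> real (card (block p))"
    using assms by (cases p) (auto simp: card_block)
  finally have "sqrt (2 powr (real p - 1) * block_amp_sq s p) \<le> sqrt (real (card (block p)) * block_amp_sq s p)"
    by (simp add: block_amp_sq_def)
  moreover have "sqrt (2 powr (real p - 1) * block_amp_sq s p) = 2 powr (- (s * real p + s + 1 / 2))"
  proof -
    have "2 powr (real p - 1) * block_amp_sq s p = (2 powr (- (s * real p + s + 1 / 2)))\<^sup>2"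
      unfolding block_amp_sq_def power2_eq_square powr_add[symmetric]
      by (rule arg_cong[where f="\<lambda>e. 2 powr e"]) (simp add: algebra_simps)
    then show ?thesis
      by simp
  qed
  ultimately show ?thesis by simp
qed

lemma card_block_amp_sq_le:
  "real (card (block p)) * (2 powr x * block_amp_sq s p)\<^sup>2 \<le> 2 powr (2 * x - real p * (4 * s + 1) - 4 * s)"
proof -
  have "real (card (block p)) * (2 powr x * block_amp_sq s p)\<^sup>2
      \<le> 2 powr real p * (2 powr x * block_amp_sq s p)\<^sup>2"
    by (intro mult_right_mono) (auto simp: card_block powr_realpow)
  also have "\<dots> = 2 powr (2 * x - real p * (4 * s + 1) - 4 * s)"
    unfolding block_amp_sq_def power2_eq_square powr_add[symmetric] by (simp add: algebra_simps)
  finally show ?thesis .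
qed

lemma block_chi_le:
  assumes "2 * real q - real p * (4 * s + 1) - 4 * s \<le> log 2 \<gamma>" "0 < \<gamma>"
  shows "real (card (block p)) * (real ((2::nat) ^ q) * block_amp_sq s p)\<^sup>2 \<le> \<gamma>"
proof -
  have "real (card (block p)) * (real ((2::nat) ^ q) * block_amp_sq s p)\<^sup>2
      = real (card (block p)) * (2 powr real q * block_amp_sq s p)\<^sup>2"
    by (simp add: powr_realpow)
  also have "\<dots> \<le> 2 powr (2 * real q - real p * (4 * s + 1) - 4 * s)"
    by (rule card_block_amp_sq_le)
  also have "\<dots> \<le> 2 powr (log 2 \<gamma>)"
    using assms(1) by simp
  finally show ?thesis
    using assms(2) by simp
qed

lemma rate_less_block_dist:
  assumes "1 \<le> p" "0 < K" "log 2 K - real q * r < - (s * real p + s + 1 / 2)"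
  shows "K * real ((2::nat) ^ q) powr (- r) < sqrt (real (card (block p)) * block_amp_sq s p)"
proof -
  have "real ((2::nat) ^ q) powr (- r) = 2 powr (- real q * r)"
    by (simp add: powr_realpow[symmetric] powr_powr)
  then have "K * real ((2::nat) ^ q) powr (- r) = 2 powr (log 2 K - real q * r)"
    using assms(2) by (simp add: powr_diff powr_minus divide_inverse)
  also have "\<dots> < 2 powr (- (s * real p + s + 1 / 2))"
    using assms(3) by simp
  also have "\<dots> \<le> sqrt (real (card (block p)) * block_amp_sq s p)"
    using assms(1) by (rule sqrt_card_block_amp_sq_ge)
  finally show ?thesis .
qed

text \<open>With \<open>n = 2^q\<close> and \<open>p \<approx> 2q / (4 s1 + 1)\<close> the perturbations are at distance of order
  \<open>n^(-2 s1 / (4 s1 + 1))\<close> from the centre, which exceeds the rate \<open>n^(-s2 / (2 s2 + 1))\<close> precisely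
  because \<open>2 s1 < s2\<close>, while the chi-square quantity \<open>card (block p) * (n * \<rho>\<^sup>2)\<^sup>2\<close> stays small.\<close>

lemma exists_separated_block:
  fixes s1 s2 K \<gamma> :: real and N :: nat
  assumes s1: "0 < s1" and s2: "2 * s1 < s2" and K: "0 < K" and \<gamma>: "0 < \<gamma>"
  obtains n p where "N \<le> n"
    "K * real n powr (- s2 / (2 * s2 + 1)) < sqrt (real (card (block p)) * block_amp_sq s1 p)"
    "real (card (block p)) * (real n * block_amp_sq s1 p)\<^sup>2 \<le> \<gamma>"
proof -
  define a where "a = 4 * s1 + 1"
  define A where "A = \<bar>log 2 \<gamma>\<bar>"
  define w where "w = s2 / (2 * s2 + 1) - 2 * s1 / a"
  define R where "R = s1 * A / a + 2 * s1 + 1 / 2 + \<bar>log 2 K\<bar>"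
  define q where "q = max N (nat \<lceil>R / w\<rceil> + 1)"
  define p where "p = nat \<lceil>(2 * real q + A) / a\<rceil>"
  have a: "0 < a" and A: "0 \<le> A"
    using s1 by (simp_all add: a_def A_def)
  have "2 * s1 * (2 * s2 + 1) < s2 * a"
    using s1 s2 by (simp add: a_def algebra_simps)
  then have "2 * s1 / a < s2 / (2 * s2 + 1)"
    using a s1 s2 by (simp add: field_simps)
  then have w: "0 < w"
    by (simp add: w_def)
  have "R / w < real q"
    unfolding q_def by linarith
  then have qR: "R < real q * w"
    using w by (simp add: field_simps)
  have "0 < (2 * real q + A) / a"
    using A a by (simp add: q_def add_pos_nonneg)
  then have p_ge: "(2 * real q + A) / a \<le> real p" and p_le: "real p \<le> (2 * real q + A) / a + 1"
    and p1: "1 \<le> p"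
    unfolding p_def by linarith+
  have "2 * real q - real p * (4 * s1 + 1) - 4 * s1 \<le> log 2 \<gamma>"
    using p_ge a s1 by (simp add: a_def A_def field_simps)
  then have chi: "real (card (block p)) * (real ((2::nat) ^ q) * block_amp_sq s1 p)\<^sup>2 \<le> \<gamma>"
    using \<gamma> by (rule block_chi_le)
  have "s1 * real p \<le> s1 * ((2 * real q + A) / a + 1)"
    using p_le s1 by (intro mult_left_mono) auto
  then have "s1 * real p \<le> real q * (2 * s1 / a) + s1 * A / a + s1"
    using a by (simp add: field_simps)
  then have "log 2 K - real q * (s2 / (2 * s2 + 1)) < - (s1 * real p + s1 + 1 / 2)"
    using qR unfolding R_def w_def by (simp add: algebra_simps)
  then have "K * real ((2::nat) ^ q) powr (- (s2 / (2 * s2 + 1)))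
      < sqrt (real (card (block p)) * block_amp_sq s1 p)"
    by (rule rate_less_block_dist[OF p1 K])
  moreover have "N \<le> 2 ^ q"
    unfolding q_def by (meson le_trans less_imp_le_nat less_exp max.cobounded1)
  ultimately show thesis
    using that[OF _ _ chi] by simp
qed

lemma exists_band_threshold:
  fixes s t \<epsilon> c :: real
  assumes d: "t * (1 - \<epsilon>) < s" and c: "0 < c"
  obtains J0 :: nat where "1 \<le> J0"
    "\<And>J. J0 \<le> J \<Longrightarrow> c * 2 powr (- 2 * real J * s) \<le> 2 powr (- 2 * t * (real J * (1 - \<epsilon>) + 1))"
proof
  define d where "d = s - t * (1 - \<epsilon>)"
  show "1 \<le> nat \<lceil>(log 2 c + 2 * t) / (2 * d)\<rceil> + 1"
    by simp
  fix J assume "nat \<lceil>(log 2 c + 2 * t) / (2 * d)\<rceil> + 1 \<le> J"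
  then have "(log 2 c + 2 * t) / (2 * d) \<le> real J"
    by linarith
  then have "log 2 c - 2 * real J * s \<le> - 2 * t * (real J * (1 - \<epsilon>) + 1)"
    using d by (simp add: d_def field_simps)
  then have "2 powr (log 2 c - 2 * real J * s) \<le> 2 powr (- 2 * t * (real J * (1 - \<epsilon>) + 1))"
    by simp
  then show "c * 2 powr (- 2 * real J * s) \<le> 2 powr (- 2 * t * (real J * (1 - \<epsilon>) + 1))"
    using c by (simp add: powr_diff powr_minus divide_inverse)
qed

lemma exists_smoothness_pair:
  fixes s1 s_max \<epsilon> :: real
  assumes s1: "0 < s1" "2 * s1 < s_max" and \<epsilon>: "1/2 < \<epsilon>" "\<epsilon> < 1"
  obtains s2 t where "2 * s1 < s2" "s2 \<le> s_max" "s2 < t" "t * (1 - \<epsilon>) < s1"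
proof
  define v where "v = 1 / (1 - \<epsilon>)"
  have v: "2 < v" "v * (1 - \<epsilon>) = 1"
    using \<epsilon> by (simp_all add: v_def field_simps)
  define s2 where "s2 = min s_max (s1 * (2 + v) / 2)"
  have "2 * s1 < s1 * (2 + v) / 2" "s1 * (2 + v) / 2 < s1 * v"
    using s1 v by (simp_all add: field_simps)
  then have s2: "2 * s1 < s2" "s2 \<le> s_max" "s2 < s1 * v"
    using s1 by (auto simp: s2_def min_less_iff_disj)
  then show "2 * s1 < s2" "s2 \<le> s_max" "s2 < (s2 + s1 * v) / 2"
    by simp_all
  have "(s2 + s1 * v) / 2 * (1 - \<epsilon>) < s1 * v * (1 - \<epsilon>)"
    using s2(3) \<epsilon> by (intro mult_strict_right_mono) auto
  then show "(s2 + s1 * v) / 2 * (1 - \<epsilon>) < s1"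
    using v by (simp add: mult.assoc)
qed

lemma lacunary_perturbations_in_S_class:
  fixes s1 s2 t \<epsilon> :: real
  assumes s: "0 < s1" "s1 < s2" "s2 < t" and band: "t * (1 - \<epsilon>) < s1" and \<epsilon>: "0 < \<epsilon>" "\<epsilon> < 1"
  obtains b B J0 where "0 < b" "b < B" "1 \<le> J0" "lacunary t \<in> S_class s2 \<epsilon> b B J0"
    "\<And>p \<theta>. \<theta> \<in> signs (block p) \<Longrightarrow>
      perturb (lacunary t) (block p) (sqrt (block_amp_sq s1 p)) \<theta> \<in> S_class s1 \<epsilon> b B J0"
proof -
  define V where "V s = 1 / (1 - 2 powr (2 * (s - t)))" for s
  have V: "1 \<le> V s" if "s < t" for s
  proof -
    have "2 powr (2 * (s - t)) < 1"
      using that by (simp add: powr_less_one)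
    then show ?thesis
      by (simp add: V_def field_simps)
  qed
  define Q where "Q = V s1 + V s2 + 1"
  define B where "B = Q + 1"
  have Q: "1 \<le> Q" "V s1 + 1 \<le> Q" "V s2 \<le> Q"
    using V[of s1] V[of s2] s by (simp_all add: Q_def)
  have "sqrt Q * 1 \<le> sqrt Q * sqrt Q"
    using Q(1) by (intro mult_left_mono) auto
  then have sqrt_Q: "sqrt Q \<le> B"
    using Q(1) by (simp add: B_def)
  have t: "0 < t" and s2: "0 < s2"
    using s by linarith+
  obtain J1 :: nat where J1: "1 \<le> J1"
    "\<And>J. J1 \<le> J \<Longrightarrow> c_const s1 * Q * 2 powr (- 2 * real J * s1) \<le> 2 powr (- 2 * t * (real J * (1 - \<epsilon>) + 1))"
    using exists_band_threshold[OF band, of "c_const s1 * Q"] Q by (auto simp: c_const_def)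
  obtain J2 :: nat where
    "\<And>J. J2 \<le> J \<Longrightarrow> c_const s2 * Q * 2 powr (- 2 * real J * s2) \<le> 2 powr (- 2 * t * (real J * (1 - \<epsilon>) + 1))"
    using exists_band_threshold[of t \<epsilon> s2 "c_const s2 * Q"] band s Q by (auto simp: c_const_def)
  with J1 have J: "1 \<le> max J1 J2"
    "\<And>J. max J1 J2 \<le> J \<Longrightarrow> c_const s1 * Q * 2 powr (- 2 * real J * s1) \<le> 2 powr (- 2 * t * (real J * (1 - \<epsilon>) + 1))"
    "\<And>J. max J1 J2 \<le> J \<Longrightarrow> c_const s2 * Q * 2 powr (- 2 * real J * s2) \<le> 2 powr (- 2 * t * (real J * (1 - \<epsilon>) + 1))"
    by auto
  show thesis
  proof (rule that[of "1/2" B "max J1 J2"])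
    show "0 < (1/2::real)" "1/2 < B" "1 \<le> max J1 J2"
      using Q J(1) by (auto simp: B_def)
    have "(\<lambda>i. (lacunary t i)\<^sup>2 * real (i + 1) powr (2 * s2)) sums V s2"
      unfolding V_def using s(3) by (rule lacunary_sobolev_sums)
    then show "lacunary t \<in> S_class s2 \<epsilon> (1/2) B (max J1 J2)"
      using V[OF s(3)] Q(3) by (intro S_class_memI[where V = "V s2", OF lacunary_pow2 \<epsilon> t s2 _ _ _ _ _ sqrt_Q J(3)]) auto
  next
    fix p \<theta> assume \<theta>: "\<theta> \<in> signs (block p)"
    define W where "W = (\<Sum>i\<in>block p. (sqrt (block_amp_sq s1 p))\<^sup>2 * real (i + 1) powr (2 * s1))"
    have W: "0 \<le> W" "W \<le> 1"
      using sum_block_weight_le[OF s(1), of p] by (auto simp: W_def block_amp_sq_def intro!: sum_nonneg)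
    have "(\<lambda>i. (perturb (lacunary t) (block p) (sqrt (block_amp_sq s1 p)) \<theta> i)\<^sup>2 * real (i + 1) powr (2 * s1))
        sums (V s1 + W)"
      unfolding V_def W_def using \<theta> s(1,2,3) by (intro perturb_lacunary_sobolev_sums) auto
    then show "perturb (lacunary t) (block p) (sqrt (block_amp_sq s1 p)) \<theta> \<in> S_class s1 \<epsilon> (1/2) B (max J1 J2)"
      using V[of s1] s W Q(2)
      by (intro S_class_memI[where V = "V s1 + W", OF perturb_lacunary_pow2 \<epsilon> t s(1) _ _ _ _ _ sqrt_Q J(2)]) auto
  qed
qed

section \<open>Impossibility of adaptation\<close>

lemma l2_dist_le_l2_diam: "F \<in> C \<Longrightarrow> G \<in> C \<Longrightarrow> ereal (l2_dist F G) \<le> l2_diam C"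
  unfolding l2_diam_def by (intro SUP_upper2[of F] SUP_upper)

lemma measure_small_cover_le:
  fixes C :: "(nat \<Rightarrow> real) \<Rightarrow> (nat \<Rightarrow> real) set" and f :: "nat \<Rightarrow> real"
  assumes \<sigma>: "0 < \<sigma>" and Fs: "finite Fs" and \<theta>: "\<theta> \<in> signs Fs"
    and sets: "\<And>F. {Y \<in> space Ysp. F \<in> C Y} \<in> sets Ysp" "{Y \<in> space Ysp. ereal T < l2_diam (C Y)} \<in> sets Ysp"
    and sep: "T < sqrt (real (card Fs) * \<rho>\<^sup>2)"
  defines "g \<equiv> perturb f Fs \<rho> \<theta>"
  shows "measure (gauss_seq \<sigma> g) {Y \<in> space Ysp. f \<in> C Y \<and> \<not> ereal T < l2_diam (C Y)}
    \<le> 1 - measure (gauss_seq \<sigma> g) {Y \<in> space Ysp. g \<in> C Y}"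
proof -
  interpret prob_space "gauss_seq \<sigma> g"
    using \<sigma> by (rule prob_space_gauss_seq)
  have "ereal T < ereal (l2_dist f g)"
    using sep l2_dist_perturb[OF \<theta> Fs] by (simp add: g_def)
  then have "f \<in> C Y \<Longrightarrow> g \<in> C Y \<Longrightarrow> ereal T < l2_diam (C Y)" for Y
    using l2_dist_le_l2_diam less_le_trans by blast
  then have "measure (gauss_seq \<sigma> g) {Y \<in> space Ysp. f \<in> C Y \<and> \<not> ereal T < l2_diam (C Y)}
      + measure (gauss_seq \<sigma> g) {Y \<in> space Ysp. g \<in> C Y}
      = measure (gauss_seq \<sigma> g) ({Y \<in> space Ysp. f \<in> C Y \<and> \<not> ereal T < l2_diam (C Y)} \<union> {Y \<in> space Ysp. g \<in> C Y})"
    using sets by (intro finite_measure_Union[symmetric]) (auto simp: sets_gauss_seq)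
  also have "\<dots> \<le> 1"
    by simp
  finally show ?thesis
    by simp
qed

text \<open>On the event that \<open>C\<close> covers \<open>f\<close> with diameter at most \<open>T\<close> it covers no perturbation,
  so the event is unlikely under every perturbed law; by the chi-square bound it is then also
  unlikely under \<open>f\<close>, contradicting coverage of \<open>f\<close>.\<close>

lemma confidence_set_conflict:
  fixes C :: "(nat \<Rightarrow> real) \<Rightarrow> (nat \<Rightarrow> real) set"
  assumes n: "0 < n" and Fs: "finite Fs" and \<eta>: "0 < \<eta>" "\<eta> \<le> 1"
    and Cov_sets: "\<And>F. {Y \<in> space Ysp. F \<in> C Y} \<in> sets Ysp"
    and Diam_sets: "{Y \<in> space Ysp. ereal T < l2_diam (C Y)} \<in> sets Ysp"
    and cover: "\<And>F. F \<in> insert f (perturb f Fs \<rho> ` signs Fs) \<Longrightarrow>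
      1 - \<alpha> - \<eta> < measure (Pr n F) {Y \<in> space (Pr n F). F \<in> C Y}"
    and diam: "measure (Pr n f) {Y \<in> space (Pr n f). ereal T < l2_diam (C Y)} < 2 * \<eta>"
    and sep: "T < sqrt (real (card Fs) * \<rho>\<^sup>2)"
    and chi: "real (card Fs) * (real n * \<rho>\<^sup>2)\<^sup>2 \<le> \<eta>\<^sup>2"
  shows "1 - 2 * \<alpha> < 6 * \<eta>"
proof -
  define \<sigma> where "\<sigma> = 1 / sqrt (real n)"
  have \<sigma>: "0 < \<sigma>"
    using n by (simp add: \<sigma>_def)
  have Pr: "Pr n F = gauss_seq \<sigma> F" for F
    by (simp add: Pr_eq_gauss_seq \<sigma>_def)
  define Big where "Big = {Y \<in> space Ysp. ereal T < l2_diam (C Y)}"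
  define E where "E = {Y \<in> space Ysp. f \<in> C Y \<and> \<not> ereal T < l2_diam (C Y)}"
  have "E = {Y \<in> space Ysp. f \<in> C Y} - Big"
    by (auto simp: E_def Big_def)
  then have E: "E \<in> sets Ysp"
    using Cov_sets Diam_sets by (simp add: Big_def sets.Diff)
  have lower: "1 - \<alpha> - 3 * \<eta> < measure (gauss_seq \<sigma> f) E"
  proof -
    interpret prob_space "gauss_seq \<sigma> f"
      using \<sigma> by (rule prob_space_gauss_seq)
    have "measure (gauss_seq \<sigma> f) {Y \<in> space Ysp. f \<in> C Y} \<le> measure (gauss_seq \<sigma> f) (E \<union> Big)"
      using E Diam_sets by (intro finite_measure_mono) (auto simp: sets_gauss_seq E_def Big_def)
    also have "\<dots> \<le> measure (gauss_seq \<sigma> f) E + measure (gauss_seq \<sigma> f) Big"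
      using E Diam_sets by (intro measure_Un_le) (auto simp: sets_gauss_seq Big_def)
    finally show ?thesis
      using cover[of f] diam by (simp add: Pr space_gauss_seq Big_def)
  qed
  have upper: "measure (gauss_seq \<sigma> (perturb f Fs \<rho> \<theta>)) E \<le> \<alpha> + \<eta>" if "\<theta> \<in> signs Fs" for \<theta>
    using measure_small_cover_le[OF \<sigma> Fs that Cov_sets Diam_sets sep, of f] cover[of "perturb f Fs \<rho> \<theta>"] that
    by (simp add: E_def Pr space_gauss_seq)
  then have "(\<Sum>\<theta>\<in>signs Fs. measure (gauss_seq \<sigma> (perturb f Fs \<rho> \<theta>)) E) / 2 ^ card Fs \<le> \<alpha> + \<eta>"
    using sum_mono[of "signs Fs", OF upper] Fs by (simp add: card_PiE field_simps)
  moreover have "\<rho>\<^sup>2 / \<sigma>\<^sup>2 = real n * \<rho>\<^sup>2"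
    using n by (simp add: \<sigma>_def power_divide)
  then have "cosh (\<rho>\<^sup>2 / \<sigma>\<^sup>2) ^ card Fs \<le> 1 + 2 * \<eta>\<^sup>2"
    using chi \<eta> by (intro cosh_pow_le) (auto simp: power_le_one)
  then have "(cosh (\<rho>\<^sup>2 / \<sigma>\<^sup>2) ^ card Fs - 1) / (2 * \<eta>) \<le> \<eta>"
    using \<eta> by (simp add: field_simps power2_eq_square)
  ultimately have "measure (gauss_seq \<sigma> f) E \<le> \<alpha> + \<eta> + \<eta> / 2 + \<eta>"
    using measure_gauss_seq_le_mixture[OF \<sigma> Fs E \<eta>(1), of f \<rho>] by linarith
  then show ?thesis
    using lower \<eta> by linarith
qed

lemma adaptive_confidence_set_conflict:
  fixes C :: "nat \<Rightarrow> (nat \<Rightarrow> real) \<Rightarrow> (nat \<Rightarrow> real) set" and f :: "nat \<Rightarrow> real"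
  assumes s: "0 < s1" "2 * s1 < s2" and K: "0 < K" and \<alpha>: "0 < \<alpha>" "\<alpha> < 1/2"
    and Cov_sets: "\<And>n F. {Y \<in> space Ysp. F \<in> C n Y} \<in> sets Ysp"
    and Diam_sets: "\<And>n T. {Y \<in> space Ysp. ereal T < l2_diam (C n Y)} \<in> sets Ysp"
    and f: "f \<in> U" "f \<in> S"
    and perturb_U: "\<And>p \<theta>. \<theta> \<in> signs (block p) \<Longrightarrow> perturb f (block p) (sqrt (block_amp_sq s1 p)) \<theta> \<in> U"
    and cover: "ereal (1 - \<alpha>) \<le> liminf (\<lambda>n. INF F\<in>U. ereal (measure (Pr n F) {Y \<in> space (Pr n F). F \<in> C n Y}))"
    and size: "limsup (\<lambda>n. SUP F\<in>S. ereal (measure (Pr n F)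
      {Y \<in> space (Pr n F). l2_diam (C n Y) > ereal (K * real n powr (- s2 / (2 * s2 + 1)))}))
        \<le> ereal ((1 - 2 * \<alpha>) / 6)"
  shows False
proof -
  define \<eta> where "\<eta> = (1 - 2 * \<alpha>) / 6"
  have \<eta>: "0 < \<eta>" "\<eta> \<le> 1"
    using \<alpha> by (simp_all add: \<eta>_def)
  define T where "T n = K * real n powr (- s2 / (2 * s2 + 1))" for n
  define cov where "cov n F = measure (Pr n F) {Y \<in> space (Pr n F). F \<in> C n Y}" for n F
  define big where "big n F = measure (Pr n F) {Y \<in> space (Pr n F). ereal (T n) < l2_diam (C n Y)}" for n F
  have "ereal (1 - \<alpha> - \<eta>) < ereal (1 - \<alpha>)"
    using \<eta> by simp
  then have ev_cover: "\<forall>\<^sub>F n in sequentially. ereal (1 - \<alpha> - \<eta>) < (INF F\<in>U. ereal (cov n F))"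
    using cover unfolding le_Liminf_iff cov_def by blast
  have "limsup (\<lambda>n. SUP F\<in>S. ereal (big n F)) \<le> ereal \<eta>"
    using size unfolding big_def T_def \<eta>_def .
  then have "limsup (\<lambda>n. SUP F\<in>S. ereal (big n F)) < ereal (2 * \<eta>)"
    using \<eta> by (simp add: le_less_trans)
  then have ev_size: "\<forall>\<^sub>F n in sequentially. (SUP F\<in>S. ereal (big n F)) < ereal (2 * \<eta>)"
    by (rule Limsup_lessD)
  obtain N where N: "\<And>n. N \<le> n \<Longrightarrow>
      ereal (1 - \<alpha> - \<eta>) < (INF F\<in>U. ereal (cov n F)) \<and> (SUP F\<in>S. ereal (big n F)) < ereal (2 * \<eta>)"
    using eventually_conj[OF ev_cover ev_size] unfolding eventually_sequentially by blast
  obtain n p where n: "max N 1 \<le> n" and sep: "T n < sqrt (real (card (block p)) * block_amp_sq s1 p)"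
    and chi: "real (card (block p)) * (real n * block_amp_sq s1 p)\<^sup>2 \<le> \<eta>\<^sup>2"
    using exists_separated_block[OF s K, of "\<eta>\<^sup>2" "max N 1"] \<eta> unfolding T_def by auto
  have Nn: "ereal (1 - \<alpha> - \<eta>) < (INF F\<in>U. ereal (cov n F))" "(SUP F\<in>S. ereal (big n F)) < ereal (2 * \<eta>)"
    using N n by auto
  have "1 - 2 * \<alpha> < 6 * \<eta>"
  proof (rule confidence_set_conflict[OF _ finite_block \<eta> Cov_sets Diam_sets])
    fix F assume "F \<in> insert f (perturb f (block p) (sqrt (block_amp_sq s1 p)) ` signs (block p))"
    then have "F \<in> U"
      using f perturb_U by blast
    then have "ereal (1 - \<alpha> - \<eta>) < ereal (cov n F)"
      using less_le_trans[OF Nn(1) INF_lower] by blast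
    then show "1 - \<alpha> - \<eta> < measure (Pr n F) {Y \<in> space (Pr n F). F \<in> C n Y}"
      by (simp add: cov_def)
  next
    have "ereal (big n f) < ereal (2 * \<eta>)"
      using SUP_upper[OF f(2)] Nn(2) by (rule le_less_trans)
    then show "measure (Pr n f) {Y \<in> space (Pr n f). ereal (T n) < l2_diam (C n Y)} < 2 * \<eta>"
      by (simp add: big_def)
  next
    show "T n < sqrt (real (card (block p)) * (sqrt (block_amp_sq s1 p))\<^sup>2)"
      using sep by (simp add: block_amp_sq_def)
    show "real (card (block p)) * (real n * (sqrt (block_amp_sq s1 p))\<^sup>2)\<^sup>2 \<le> \<eta>\<^sup>2"
      using chi by (simp add: block_amp_sq_def)
  qed (use n in simp)
  then show False
    by (simp add: \<eta>_def)
qed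

theorem corollary1:
  fixes s_min s_max \<alpha> \<epsilon> :: real
  assumes "0 < s_min" "s_min < s_max" "s_max > 2 * s_min"
    and "0 < \<alpha>" "\<alpha> < 1/2"
    and "1/2 < \<epsilon>" "\<epsilon> < 1"
  shows "\<not> (\<exists>C :: nat \<Rightarrow> (nat \<Rightarrow> real) \<Rightarrow> (nat \<Rightarrow> real) set.
     (\<forall>n Y. C n Y \<subseteq> l2) \<and>
     (\<forall>n F. {Y \<in> space Ysp. F \<in> C n Y} \<in> sets Ysp) \<and>
     (\<forall>n (t::ereal). {Y \<in> space Ysp. l2_diam (C n Y) > t} \<in> sets Ysp) \<and>
     (\<forall>b B J0. 0 < b \<longrightarrow> b < B \<longrightarrow> 1 \<le> J0 \<longrightarrow>
        liminf (\<lambda>n. INF F\<in>(\<Union>s\<in>{s_min..s_max}. S_class s \<epsilon> b B J0).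
            ereal (measure (Pr n F) {Y \<in> space (Pr n F). F \<in> C n Y}))
          \<ge> ereal (1 - \<alpha>) \<and>
        (\<forall>s\<in>{s_min..s_max}. \<forall>\<delta>>0. \<exists>K>0.
           limsup (\<lambda>n. SUP F\<in>S_class s \<epsilon> b B J0.
             ereal (measure (Pr n F)
               {Y \<in> space (Pr n F). l2_diam (C n Y) > ereal (K * real n powr (- s / (2 * s + 1)))}))
           \<le> ereal \<delta>)))"
proof (intro notI, elim exE conjE, goal_cases)
  case (1 C)
  note Cov_sets = 1(2) and Diam_sets = 1(3) and adaptive = 1(4)
  have \<epsilon>: "0 < \<epsilon>" "\<epsilon> < 1"
    using assms by simp_all
  obtain s2 t where s2: "2 * s_min < s2" "s2 \<le> s_max" and t: "s2 < t" "t * (1 - \<epsilon>) < s_min"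
    using exists_smoothness_pair[OF assms(1) _ assms(6,7)] assms(3) by blast
  have s2_range: "s2 \<in> {s_min..s_max}" and "s_min < s2"
    using s2 assms(1) by simp_all
  obtain b B J0 where bB: "0 < b" "b < B" "1 \<le> J0" and f: "lacunary t \<in> S_class s2 \<epsilon> b B J0"
    and perturb_S: "\<And>p \<theta>. \<theta> \<in> signs (block p) \<Longrightarrow>
      perturb (lacunary t) (block p) (sqrt (block_amp_sq s_min p)) \<theta> \<in> S_class s_min \<epsilon> b B J0"
    using lacunary_perturbations_in_S_class[OF assms(1) \<open>s_min < s2\<close> t \<epsilon>] by blast
  have "0 < (1 - 2 * \<alpha>) / 6"
    using assms by simp
  then obtain K where "0 < K" and size: "limsup (\<lambda>n. SUP F\<in>S_class s2 \<epsilon> b B J0. ereal (measure (Pr n F)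
      {Y \<in> space (Pr n F). l2_diam (C n Y) > ereal (K * real n powr (- s2 / (2 * s2 + 1)))}))
        \<le> ereal ((1 - 2 * \<alpha>) / 6)"
    using adaptive bB s2_range by blast
  show False
  proof (rule adaptive_confidence_set_conflict[OF assms(1) s2(1) \<open>0 < K\<close> assms(4,5)
        Cov_sets[rule_format] Diam_sets[rule_format] _ f _ _ size])
    show "ereal (1 - \<alpha>) \<le> liminf (\<lambda>n. INF F\<in>(\<Union>s\<in>{s_min..s_max}. S_class s \<epsilon> b B J0).
        ereal (measure (Pr n F) {Y \<in> space (Pr n F). F \<in> C n Y}))"
      using adaptive bB by blast
    show "lacunary t \<in> (\<Union>s\<in>{s_min..s_max}. S_class s \<epsilon> b B J0)"
      using f s2_range by blast
    show "perturb (lacunary t) (block p) (sqrt (block_amp_sq s_min p)) \<theta> \<in> (\<Union>s\<in>{s_min..s_max}. S_class s \<epsilon> b B J0)"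
      if "\<theta> \<in> signs (block p)" for p \<theta>
      using perturb_S[OF that] assms(2) by auto
  qed
qed

end
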